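(* Let $k \geq 3$ be an odd integer. Any non-reducible partial $k$-star design of order $3k+1$ with four stars is completable.
   Context: A $k$-star is a copy of $K_{1,k}$; its vertex of degree $k$ is the centre and the others are leaves. A partial $k$-star design of order $n$ is a pair $(V,\mathcal{A})$ where $V$ is a set of $n$ vertices and $\mathcal{A}$ is a set of edge-disjoint $k$-stars that are subgraphs of the complete graph $K_V$; it is completable if there is a set $\mathcal{B}\supseteq\mathcal{A}$ of edge-disjoint $k$-stars in $K_V$ covering all edges of $K_V$. Let \[u(n,k)= \begin{cases} 2 \lfloor \frac{n-2}{k} \rfloor-1 & \text{if $n \not \equiv 1\pmod{k}$},\\ \frac{2(n-1)}{k} - 2 & \text{if $n \equiv 1\pmod{k}$.} \end{cases} \] A partial $k$-star design $(V,\mathcal{A})$ of order $n$ is reducible if $n \equiv 1 \pmod{k}$, $|\mathcal{A}|=u(n,k)$, and there is a vertex which is the centre of at least one star in $\mathcal{A}$ and is not a leaf of any star in $\mathcal{A}$; otherwise it is non-reducible. *)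

theory Defs
  imports Main
begin

text \<open>A k-star in K_V is represented as a pair (centre, set of leaves).\<close>

definition is_star :: "nat \<Rightarrow> 'a set \<Rightarrow> 'a \<times> 'a set \<Rightarrow> bool" where
  "is_star k V S \<longleftrightarrow> fst S \<in> V \<and> snd S \<subseteq> V - {fst S} \<and> finite (snd S) \<and> card (snd S) = k"

definition star_edges :: "'a \<times> 'a set \<Rightarrow> 'a set set" where
  "star_edges S = (\<lambda>x. {fst S, x}) ` snd S"

definition complete_edges :: "'a set \<Rightarrow> 'a set set" where
  "complete_edges V = {e. \<exists>x\<in>V. \<exists>y\<in>V. x \<noteq> y \<and> e = {x, y}}"

definition partial_star_design :: "nat \<Rightarrow> 'a set \<Rightarrow> ('a \<times> 'a set) set \<Rightarrow> bool" where
  "partial_star_design k V A \<longleftrightarrow> finite V \<and> (\<forall>S\<in>A. is_star k V S) \<and>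
     (\<forall>S\<in>A. \<forall>T\<in>A. S \<noteq> T \<longrightarrow> star_edges S \<inter> star_edges T = {})"

definition completable :: "nat \<Rightarrow> 'a set \<Rightarrow> ('a \<times> 'a set) set \<Rightarrow> bool" where
  "completable k V A \<longleftrightarrow> (\<exists>B. A \<subseteq> B \<and> partial_star_design k V B \<and>
     \<Union> (star_edges ` B) = complete_edges V)"

definition u_bound :: "nat \<Rightarrow> nat \<Rightarrow> int" where
  "u_bound n k = (if n mod k \<noteq> 1 mod k then 2 * ((int n - 2) div int k) - 1
                  else 2 * (int n - 1) div int k - 2)"

definition reducible :: "nat \<Rightarrow> 'a set \<Rightarrow> ('a \<times> 'a set) set \<Rightarrow> bool" where
  "reducible k V A \<longleftrightarrow> card V mod k = 1 mod k \<and> int (card A) = u_bound (card V) k \<and>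
     (\<exists>v. (\<exists>S\<in>A. fst S = v) \<and> (\<forall>S\<in>A. v \<notin> snd S))"

end

theory Submission
  imports Defs
begin

(* Orient every star of A from its centre towards its leaves and call these arcs forced.  A
   completion of A amounts to a tournament on V that contains the forced arcs and in which every
   vertex has out-degree divisible by k: the unforced out-arcs at a vertex are then cut into new
   k-stars.  For n = 3k + 1 the tournament has 3k(3k + 1)/2 arcs, so we prescribe out-degree 2k on
   a set R of (3k + 1)/2 vertices (an integer as k is odd) and out-degree k elsewhere.  Such a
   tournament exists by Hakimi's criterion: for every vertex set S, the arcs inside S together with
   the forced arcs leaving S must not exceed the out-degree prescribed on S.  We prove the criterion
   by taking a tournament of minimal total excess and reversing a path of unforced arcs.  To make it
   hold, R consists of all centres and of vertices entered by at most two forced arcs.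
   Non-reducibility says that every centre is also a leaf; with four stars this implies that no
   vertex is the centre of three stars, at most one vertex is the centre of two, and at most one
   centre of a single star is a leaf of all three other stars. *)

section \<open>Tournaments with prescribed out-degrees\<close>

lemma relpow_mono: "(R :: 'a rel) \<subseteq> S \<Longrightarrow> R ^^ n \<subseteq> S ^^ n"
  by (induction n) (simp_all add: relcomp_mono)

lemma relpow_avoiding_arc:
  "(x, y) \<in> R ^^ n \<Longrightarrow> (x, y) \<in> (R - {(a, b)}) ^^ n \<or> (\<exists>j<n. (b, y) \<in> R ^^ j)"
proof (induction n arbitrary: x)
  case 0
  then show ?case by simp
next
  case (Suc n)
  then obtain z where xz: "(x, z) \<in> R" and zy: "(z, y) \<in> R ^^ n"
    by (blast elim: relpow_Suc_E2)
  show ?case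
  proof (cases "(x, z) = (a, b)")
    case True
    then show ?thesis using zy by auto
  next
    case False
    with xz have "(x, z) \<in> R - {(a, b)}" by simp
    then show ?thesis using Suc.IH[OF zy] by (meson relpow_Suc_I2 less_SucI)
  qed
qed

lemma card_converse: "card (r\<inverse>) = card r"
proof -
  have "r\<inverse> = prod.swap ` r" by auto
  then show ?thesis by (simp add: card_image)
qed

lemma card_Int_Times:
  assumes "finite S" "finite T"
  shows "card (F \<inter> S \<times> T) = (\<Sum>x\<in>S. card (F `` {x} \<inter> T))"
proof -
  have "F \<inter> S \<times> T = Sigma S (\<lambda>x. F `` {x} \<inter> T)" by auto
  then show ?thesis using assms by simp
qed

lemma card_off_diagonal:
  assumes "finite S"
  shows "card {(x, y). x \<in> S \<and> y \<in> S \<and> x \<noteq> y} = card S * (card S - 1)"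
proof -
  have "{(x, y). x \<in> S \<and> y \<in> S \<and> x \<noteq> y} = Sigma S (\<lambda>x. S - {x})" by auto
  then show ?thesis using assms by simp
qed

lemma card_asym_le:
  assumes "finite S" "Q \<subseteq> S \<times> S" "asym Q"
  shows "2 * card Q \<le> card S * (card S - 1)"
proof -
  have "finite Q" using assms(1,2) finite_subset by blast
  moreover have "Q \<inter> Q\<inverse> = {}" using assms(3) by (auto dest: asymD)
  ultimately have "2 * card Q = card (Q \<union> Q\<inverse>)" by (simp add: card_Un_disjoint card_converse)
  also have "\<dots> \<le> card {(x, y). x \<in> S \<and> y \<in> S \<and> x \<noteq> y}"
    using assms by (intro card_mono) (auto dest: asymD intro: finite_subset[of _ "S \<times> S"])
  finally show ?thesis using card_off_diagonal[OF assms(1)] by simp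
qed

lemma finite_Image_if_subset: "finite V \<Longrightarrow> D \<subseteq> V \<times> V \<Longrightarrow> finite (D `` {x})"
  by (rule finite_subset[of _ V]) auto

definition tournament :: "'a set \<Rightarrow> 'a rel \<Rightarrow> bool" where
  "tournament V D \<longleftrightarrow> D \<subseteq> V \<times> V \<and> asym D \<and> total_on V D"

definition out_degree :: "'a rel \<Rightarrow> 'a \<Rightarrow> nat" where
  "out_degree D x = card (D `` {x})"

lemma tournamentD:
  assumes "tournament V D"
  shows "D \<subseteq> V \<times> V" and "asym D"
    and "x \<in> V \<Longrightarrow> y \<in> V \<Longrightarrow> x \<noteq> y \<Longrightarrow> (x, y) \<in> D \<or> (y, x) \<in> D"
  using assms unfolding tournament_def total_on_def by auto

lemma tournament_extension_exists:
  assumes "finite V" "F \<subseteq> V \<times> V" "asym F"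
  obtains D where "tournament V D" "F \<subseteq> D"
proof -
  obtain f :: "'a \<Rightarrow> nat" where f: "inj_on f V"
    using finite_imp_inj_to_nat_seg[OF assms(1)] by blast
  define D where "D = F \<union> {(x, y). x \<in> V \<and> y \<in> V \<and> (y, x) \<notin> F \<and> f x < f y}"
  have "f x < f y \<or> f y < f x" if "x \<in> V" "y \<in> V" "x \<noteq> y" for x y
    using f that inj_on_def by (metis linorder_neq_iff)
  then have "tournament V D"
    using assms(2,3) unfolding tournament_def total_on_def asym_iff D_def by auto
  moreover have "F \<subseteq> D" unfolding D_def by blast
  ultimately show ?thesis using that by blast
qed

lemma card_tournament:
  assumes "finite V" "tournament V D"
  shows "2 * card D = card V * (card V - 1)"
proof -
  have "finite D" using assms tournamentD(1) finite_subset by blast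
  moreover have "D \<inter> D\<inverse> = {}" using tournamentD(2)[OF assms(2)] by (auto dest: asymD)
  moreover have "D \<union> D\<inverse> = {(x, y). x \<in> V \<and> y \<in> V \<and> x \<noteq> y}"
    using assms(2) unfolding tournament_def total_on_def by (auto dest: asymD)
  ultimately have "card D + card (D\<inverse>) = card V * (card V - 1)"
    using card_Un_disjoint[of D "D\<inverse>"] card_off_diagonal[OF assms(1)] by simp
  then show ?thesis by (simp add: card_converse)
qed

lemma sum_out_degree:
  assumes "finite V" "D \<subseteq> V \<times> V" "S \<subseteq> V"
  shows "sum (out_degree D) S = card (D \<inter> S \<times> V)"
proof -
  have "D `` {x} \<inter> V = D `` {x}" for x using assms(2) by blast
  then show ?thesis
    using card_Int_Times[OF finite_subset[OF assms(3,1)] assms(1)] unfolding out_degree_def by simp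
qed

lemma sum_out_degree_le_if_closed:
  assumes "finite V" "tournament V D" "S \<subseteq> V" "D \<inter> S \<times> (V - S) \<subseteq> F"
  shows "2 * sum (out_degree D) S \<le> card S * (card S - 1) + 2 * card (F \<inter> S \<times> (V - S))"
proof -
  have DV: "D \<subseteq> V \<times> V" using tournamentD(1)[OF assms(2)] .
  have split: "D \<inter> S \<times> V = (D \<inter> S \<times> S) \<union> (D \<inter> S \<times> (V - S))" using assms(3) by blast
  have "finite (D \<inter> S \<times> V)"
    by (rule finite_subset[of _ "V \<times> V"]) (use DV assms(1) in auto)
  then have "card (D \<inter> S \<times> V) = card (D \<inter> S \<times> S) + card (D \<inter> S \<times> (V - S))"
    unfolding split by (intro card_Un_disjoint) auto
  then have "sum (out_degree D) S = card (D \<inter> S \<times> S) + card (D \<inter> S \<times> (V - S))"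
    using sum_out_degree[OF assms(1) DV assms(3)] by simp
  moreover have "2 * card (D \<inter> S \<times> S) \<le> card S * (card S - 1)"
    using assms(1,3) tournamentD(2)[OF assms(2)]
    by (intro card_asym_le) (auto dest: asymD intro: finite_subset)
  moreover have "finite (F \<inter> S \<times> (V - S))"
    using finite_subset[OF assms(3,1)] assms(1) by blast
  then have "card (D \<inter> S \<times> (V - S)) \<le> card (F \<inter> S \<times> (V - S))"
    using assms(4) by (intro card_mono) auto
  ultimately show ?thesis by linarith
qed

definition out_degree_transfer :: "'a set \<Rightarrow> 'a rel \<Rightarrow> 'a rel \<Rightarrow> 'a \<Rightarrow> 'a \<Rightarrow> 'a rel \<Rightarrow> bool" where
  "out_degree_transfer V F D v u D' \<longleftrightarrow> tournament V D' \<and> F \<subseteq> D' \<and>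
     Suc (out_degree D' v) = out_degree D v \<and> out_degree D' u = Suc (out_degree D u) \<and>
     (\<forall>x. x \<noteq> v \<longrightarrow> x \<noteq> u \<longrightarrow> out_degree D' x = out_degree D x)"

lemma out_degree_transfer_reverse_arc:
  assumes "finite V" "tournament V D" "F \<subseteq> D" "(v, u) \<in> D - F"
  shows "out_degree_transfer V F D v u (insert (u, v) (D - {(v, u)}))"
proof -
  define D' where "D' = insert (u, v) (D - {(v, u)})"
  have fin: "finite (D `` {x})" for x
    using finite_Image_if_subset[OF assms(1) tournamentD(1)[OF assms(2)]] .
  have "(u, v) \<notin> D" and "v \<noteq> u"
    using asymD[OF tournamentD(2)[OF assms(2)], of v u] assms(4) by auto
  then have "D' `` {v} = D `` {v} - {u}" and "D' `` {u} = insert v (D `` {u})"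
    and "v \<notin> D `` {u}" and "u \<in> D `` {v}"
    using assms(4) unfolding D'_def by auto
  moreover have "D' `` {x} = D `` {x}" if "x \<noteq> v" "x \<noteq> u" for x
    using that unfolding D'_def by auto
  moreover have "tournament V D'"
    using assms(2,4) unfolding D'_def tournament_def total_on_def asym_iff by blast
  moreover have "F \<subseteq> D'" using assms(3,4) unfolding D'_def by blast
  moreover have "card (D `` {v}) > 0" using fin \<open>u \<in> D `` {v}\<close> card_gt_0_iff by blast
  ultimately show ?thesis
    using fin unfolding out_degree_transfer_def out_degree_def D'_def[symmetric] by simp
qed

lemma out_degree_transfer_trans:
  assumes "out_degree_transfer V F D v w D1" "out_degree_transfer V F D1 w u D2" "v \<noteq> u"
  shows "out_degree_transfer V F D v u D2"
proof -
  have "v \<noteq> w" "w \<noteq> u" using assms(1,2) unfolding out_degree_transfer_def by auto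
  moreover have "out_degree D2 x = out_degree D x" if "x \<noteq> v" "x \<noteq> u" for x
    using assms(1,2) that unfolding out_degree_transfer_def by (cases "x = w") auto
  ultimately show ?thesis using assms unfolding out_degree_transfer_def by auto
qed

(* Reverse the first arc (v, w) and recurse on the remaining path from w to u; it avoids (v, w)
   unless a shorter path from w to u exists, in which case we recurse on that one. *)
lemma out_degree_transfer_along_path:
  assumes "finite V" "tournament V D" "F \<subseteq> D" "(v, u) \<in> (D - F) ^^ n" "v \<noteq> u"
  shows "\<exists>D'. out_degree_transfer V F D v u D'"
  using assms(2-5)
proof (induction n arbitrary: D v rule: less_induct)
  case (less n)
  have "n \<noteq> 0" using less.prems(3,4) by (metis relpow_0_E)
  then obtain m where n: "n = Suc m" using not0_implies_Suc by blast
  then obtain w where vw: "(v, w) \<in> D - F" and wu: "(w, u) \<in> (D - F) ^^ m"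
    using relpow_Suc_D2[OF less.prems(3)[unfolded n]] by blast
  show ?case
  proof (cases "\<exists>j<m. (w, u) \<in> (D - F) ^^ j")
    case True
    then obtain j where "j < m" and "(w, u) \<in> (D - F) ^^ j" by blast
    then have "Suc j < n" and "(v, u) \<in> (D - F) ^^ Suc j"
      using n relpow_Suc_I2[OF vw] by auto
    then show ?thesis by (rule less.IH[OF _ less.prems(1,2) _ less.prems(4)])
  next
    case False
    define D1 where "D1 = insert (w, v) (D - {(v, w)})"
    have first: "out_degree_transfer V F D v w D1"
      unfolding D1_def by (rule out_degree_transfer_reverse_arc[OF assms(1) less.prems(1,2) vw])
    show ?thesis
    proof (cases "w = u")
      case True
      then show ?thesis using first by blast
    next
      case False
      have "D - F - {(v, w)} \<subseteq> D1 - F" unfolding D1_def by blast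
      then have "(w, u) \<in> (D1 - F) ^^ m"
        using relpow_avoiding_arc[OF wu] \<open>\<not> (\<exists>j<m. (w, u) \<in> (D - F) ^^ j)\<close> relpow_mono by blast
      moreover have "m < n" "tournament V D1" "F \<subseteq> D1"
        using n first unfolding out_degree_transfer_def by auto
      ultimately obtain D2 where "out_degree_transfer V F D1 w u D2"
        using less.IH False by blast
      then have "out_degree_transfer V F D v u D2"
        by (rule out_degree_transfer_trans[OF first _ less.prems(4)])
      then show ?thesis by blast
    qed
  qed
qed

definition out_degree_excess :: "'a set \<Rightarrow> ('a \<Rightarrow> nat) \<Rightarrow> 'a rel \<Rightarrow> nat" where
  "out_degree_excess V d D = (\<Sum>x\<in>V. out_degree D x - d x)"

lemma out_degree_excess_decreases:
  assumes "finite V" "tournament V D" "F \<subseteq> D" "v \<in> V" "d v < out_degree D v"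
    and "(v, u) \<in> (D - F)\<^sup>*" "out_degree D u < d u"
  obtains D' where "tournament V D'" "F \<subseteq> D'" "out_degree_excess V d D' < out_degree_excess V d D"
proof -
  obtain n where path: "(v, u) \<in> (D - F) ^^ n" using assms(6) rtrancl_power by blast
  have "v \<noteq> u" using assms(5,7) by auto
  then obtain D' where D': "out_degree_transfer V F D v u D'"
    using out_degree_transfer_along_path[OF assms(1-3) path] by blast
  have "out_degree D' x - d x \<le> out_degree D x - d x" for x
    using D' assms(7) unfolding out_degree_transfer_def
    by (cases "x = v"; cases "x = u") auto
  moreover have "out_degree D' v - d v < out_degree D v - d v"
    using D' assms(5) unfolding out_degree_transfer_def by auto
  ultimately have "out_degree_excess V d D' < out_degree_excess V d D"
    unfolding out_degree_excess_def using assms(1,4) by (intro sum_strict_mono_ex1) auto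
  then show ?thesis using D' that unfolding out_degree_transfer_def by blast
qed

lemma reachable_set_violates_cut:
  assumes "finite V" "tournament V D" "v \<in> V" "d v < out_degree D v"
    and "\<And>u. (v, u) \<in> (D - F)\<^sup>* \<Longrightarrow> d u \<le> out_degree D u"
  defines "S \<equiv> (D - F)\<^sup>* `` {v}"
  shows "S \<subseteq> V" and "2 * sum d S < card S * (card S - 1) + 2 * card (F \<inter> S \<times> (V - S))"
proof -
  have DV: "D \<subseteq> V \<times> V" using tournamentD(1)[OF assms(2)] .
  show SV: "S \<subseteq> V"
  proof
    fix u assume "u \<in> S"
    then have "(v, u) \<in> (D - F)\<^sup>*" unfolding S_def by simp
    then show "u \<in> V" using assms(3) DV by (cases rule: rtranclE) auto
  qed
  have closed: "D \<inter> S \<times> (V - S) \<subseteq> F"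
  proof
    fix p assume "p \<in> D \<inter> S \<times> (V - S)"
    then obtain x y where "p = (x, y)" "(v, x) \<in> (D - F)\<^sup>*" "y \<notin> S" "(x, y) \<in> D"
      unfolding S_def by auto
    moreover have "(v, y) \<in> (D - F)\<^sup>*" if "(x, y) \<in> D - F"
      using rtrancl_into_rtrancl[OF \<open>(v, x) \<in> (D - F)\<^sup>*\<close> that] .
    ultimately show "p \<in> F" unfolding S_def by blast
  qed
  have "sum d S < sum (out_degree D) S"
  proof (rule sum_strict_mono_ex1)
    show "finite S" using SV assms(1) finite_subset by blast
    show "\<forall>x\<in>S. d x \<le> out_degree D x" using assms(5) unfolding S_def by blast
    have "v \<in> S" unfolding S_def by simp
    then show "\<exists>x\<in>S. d x < out_degree D x" using assms(4) by blast
  qed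
  then show "2 * sum d S < card S * (card S - 1) + 2 * card (F \<inter> S \<times> (V - S))"
    using sum_out_degree_le_if_closed[OF assms(1,2) SV closed] by linarith

qed

theorem tournament_with_prescribed_out_degrees:
  fixes d :: "'a \<Rightarrow> nat"
  assumes finite: "finite V" and F: "F \<subseteq> V \<times> V" "asym F"
    and total: "2 * sum d V = card V * (card V - 1)"
    and cut: "\<And>S. S \<subseteq> V \<Longrightarrow> card S * (card S - 1) + 2 * card (F \<inter> S \<times> (V - S)) \<le> 2 * sum d S"
  obtains D where "tournament V D" "F \<subseteq> D" "\<And>x. x \<in> V \<Longrightarrow> out_degree D x = d x"
proof -
  obtain D0 where "tournament V D0 \<and> F \<subseteq> D0" using tournament_extension_exists[OF finite F] by blast
  then obtain D where D: "tournament V D" "F \<subseteq> D" and minimal: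
    "\<And>D'. tournament V D' \<Longrightarrow> F \<subseteq> D' \<Longrightarrow> out_degree_excess V d D \<le> out_degree_excess V d D'"
    using ex_has_least_nat[of "\<lambda>D. tournament V D \<and> F \<subseteq> D" D0 "out_degree_excess V d"] by blast
  have le: "out_degree D v \<le> d v" if v: "v \<in> V" for v
  proof (rule ccontr)
    assume "\<not> out_degree D v \<le> d v"
    then have excess: "d v < out_degree D v" by simp
    show False
    proof (cases "\<exists>u. (v, u) \<in> (D - F)\<^sup>* \<and> out_degree D u < d u")
      case True
      then obtain u where "(v, u) \<in> (D - F)\<^sup>*" "out_degree D u < d u" by blast
      then obtain D' where "tournament V D'" "F \<subseteq> D'"
        "out_degree_excess V d D' < out_degree_excess V d D"
        using out_degree_excess_decreases[where d = d, OF finite D v excess] by blast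
      then show False using minimal by (meson leD)
    next
      case False
      then have "\<And>u. (v, u) \<in> (D - F)\<^sup>* \<Longrightarrow> d u \<le> out_degree D u" by (meson not_le)
      note violated = reachable_set_violates_cut[where d = d and F = F, OF finite D(1) v excess this]
      then show False using cut[OF violated(1)] by linarith
    qed
  qed
  have "D \<inter> V \<times> V = D" using tournamentD(1)[OF D(1)] by blast
  then have "sum (out_degree D) V = sum d V"
    using sum_out_degree[OF finite tournamentD(1)[OF D(1)] order_refl] card_tournament[OF finite D(1)]
      total by simp
  then have "out_degree D x = d x" if "x \<in> V" for x
    using sum_mono_inv[of "out_degree D" V d] le that finite by simp
  with D that show ?thesis by blast
qed

section \<open>Star designs as oriented graphs\<close>

definition star_arcs :: "'a \<times> 'a set \<Rightarrow> 'a rel" where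
  "star_arcs S = {fst S} \<times> snd S"

definition design_arcs :: "('a \<times> 'a set) set \<Rightarrow> 'a rel" where
  "design_arcs A = (\<Union>S\<in>A. star_arcs S)"

lemma design_arcs_iff: "(x, y) \<in> design_arcs A \<longleftrightarrow> (\<exists>S\<in>A. fst S = x \<and> y \<in> snd S)"
  unfolding design_arcs_def star_arcs_def by auto

lemma star_arcs_subset_design_arcs: "S \<in> A \<Longrightarrow> star_arcs S \<subseteq> design_arcs A"
  unfolding design_arcs_def by blast

lemma design_arcs_Sigma: "design_arcs (Sigma V P) = (SIGMA x:V. \<Union>(P x))"
  unfolding design_arcs_def star_arcs_def by auto

lemma design_arcs_Un: "design_arcs (A \<union> B) = design_arcs A \<union> design_arcs B"
  unfolding design_arcs_def by blast

lemma star_edges_eq_image_star_arcs: "star_edges S = (\<lambda>(x, y). {x, y}) ` star_arcs S"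
  unfolding star_edges_def star_arcs_def by auto

lemma Union_star_edges_eq_image_design_arcs:
  "\<Union> (star_edges ` B) = (\<lambda>(x, y). {x, y}) ` design_arcs B"
  unfolding design_arcs_def star_edges_eq_image_star_arcs by blast

lemma star_edges_disjoint_iff:
  "star_edges S \<inter> star_edges T = {} \<longleftrightarrow> star_arcs S \<inter> (star_arcs T \<union> (star_arcs T)\<inverse>) = {}"
  unfolding star_edges_eq_image_star_arcs by (auto simp: doubleton_eq_iff)

lemma star_arcs_disjoint:
  assumes "partial_star_design k V A" "S \<in> A" "T \<in> A" "S \<noteq> T"
  shows "star_arcs S \<inter> star_arcs T = {}" and "star_arcs S \<inter> (star_arcs T)\<inverse> = {}"
  using assms star_edges_disjoint_iff[of S T] unfolding partial_star_design_def by blast+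

lemma design_arcs_subset:
  "partial_star_design k V A \<Longrightarrow> design_arcs A \<subseteq> V \<times> V"
  unfolding partial_star_design_def is_star_def design_arcs_def star_arcs_def by fastforce

lemma asym_design_arcs:
  assumes "partial_star_design k V A"
  shows "asym (design_arcs A)"
proof
  fix x y assume "(x, y) \<in> design_arcs A"
  then obtain S where S: "S \<in> A" "fst S = x" "y \<in> snd S"
    unfolding design_arcs_def star_arcs_def by blast
  show "(y, x) \<notin> design_arcs A"
  proof
    assume "(y, x) \<in> design_arcs A"
    then obtain T where T: "T \<in> A" "fst T = y" "x \<in> snd T"
      unfolding design_arcs_def star_arcs_def by blast
    have "y \<noteq> x" using S assms unfolding partial_star_design_def is_star_def by blast
    then have "S \<noteq> T" using S T by auto
    moreover have "(x, y) \<in> star_arcs S \<inter> (star_arcs T)\<inverse>"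
      using S T unfolding star_arcs_def by auto
    ultimately show False using star_arcs_disjoint(2)[OF assms S(1) T(1)] by blast
  qed
qed

lemma partial_star_design_if_arcs_disjoint:
  assumes "finite V" "\<And>S. S \<in> B \<Longrightarrow> is_star k V S" "asym (design_arcs B)"
    and "\<And>S T. S \<in> B \<Longrightarrow> T \<in> B \<Longrightarrow> S \<noteq> T \<Longrightarrow> star_arcs S \<inter> star_arcs T = {}"
  shows "partial_star_design k V B"
  unfolding partial_star_design_def star_edges_disjoint_iff
proof (intro conjI ballI impI)
  fix S T assume "S \<in> B" "T \<in> B" "S \<noteq> T"
  moreover have "star_arcs S \<inter> (star_arcs T)\<inverse> = {}"
    using asymD[OF assms(3)] \<open>S \<in> B\<close> \<open>T \<in> B\<close> unfolding design_arcs_def by blast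
  ultimately show "star_arcs S \<inter> (star_arcs T \<union> (star_arcs T)\<inverse>) = {}" using assms(4) by blast
qed (use assms(1,2) in auto)

lemma card_design_arcs_Image:
  assumes "partial_star_design k V A" "finite A"
  shows "card (design_arcs A `` {x}) = k * card {S \<in> A. fst S = x}"
proof -
  have "design_arcs A `` {x} = (\<Union>S\<in>{S \<in> A. fst S = x}. snd S)"
    unfolding design_arcs_def star_arcs_def by auto
  moreover have "card (\<Union>S\<in>{S \<in> A. fst S = x}. snd S) = (\<Sum>S\<in>{S \<in> A. fst S = x}. card (snd S))"
  proof (rule card_UN_disjoint)
    show "finite {S \<in> A. fst S = x}" using assms(2) by simp
    show "\<forall>S\<in>{S \<in> A. fst S = x}. finite (snd S)"
      using assms(1) unfolding partial_star_design_def is_star_def by blast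
    show "\<forall>S\<in>{S \<in> A. fst S = x}. \<forall>T\<in>{S \<in> A. fst S = x}. S \<noteq> T \<longrightarrow> snd S \<inter> snd T = {}"
      using star_arcs_disjoint(1)[OF assms(1)] unfolding star_arcs_def by fastforce
  qed
  moreover have "card (snd S) = k" if "S \<in> A" for S
    using assms(1) that unfolding partial_star_design_def is_star_def by blast
  ultimately show ?thesis by simp
qed

lemma card_converse_design_arcs_Image_le:
  assumes "finite A"
  shows "card ((design_arcs A)\<inverse> `` {y}) \<le> card {S \<in> A. y \<in> snd S}"
proof -
  have "(design_arcs A)\<inverse> `` {y} = fst ` {S \<in> A. y \<in> snd S}"
    unfolding design_arcs_def star_arcs_def by force
  then show ?thesis using assms by (simp add: card_image_le)
qed

lemma card_leaf_stars_add_card_centred_stars_le: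
  assumes "partial_star_design k V A" "finite A"
  shows "card {S \<in> A. y \<in> snd S} + card {S \<in> A. fst S = y} \<le> card A"
proof -
  have "{S \<in> A. y \<in> snd S} \<inter> {S \<in> A. fst S = y} = {}"
    using assms(1) unfolding partial_star_design_def is_star_def by blast
  then have "card {S \<in> A. y \<in> snd S} + card {S \<in> A. fst S = y}
      = card ({S \<in> A. y \<in> snd S} \<union> {S \<in> A. fst S = y})"
    using assms(2) by (simp add: card_Un_disjoint)
  also have "\<dots> \<le> card A" using assms(2) by (intro card_mono) auto
  finally show ?thesis .
qed

lemma card_design_arcs_le:
  assumes "partial_star_design k V A" "finite A"
  shows "card (design_arcs A) \<le> k * card A"
proof -
  have "card (design_arcs A) \<le> (\<Sum>S\<in>A. card (star_arcs S))"
    unfolding design_arcs_def using assms(2) by (rule card_UN_le)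
  also have "\<dots> = (\<Sum>S\<in>A. k)"
    using assms(1) unfolding partial_star_design_def is_star_def star_arcs_def
    by (intro sum.cong) (auto simp: card_cartesian_product)
  finally show ?thesis by (simp add: mult.commute)
qed

lemma partition_into_subsets_of_card:
  assumes "finite X" "k dvd card X"
  shows "\<exists>P. (\<forall>Y\<in>P. Y \<subseteq> X \<and> card Y = k) \<and> pairwise disjnt P \<and> \<Union>P = X"
proof -
  obtain j where "card X = j * k" using assms(2) by (metis dvdE mult.commute)
  with assms(1) show ?thesis
  proof (induction j arbitrary: X)
    case 0
    then show ?case by (intro exI[of _ "{}"]) simp
  next
    case (Suc j)
    then obtain Y where Y: "Y \<subseteq> X" "card Y = k"
      by (metis le_add1 mult_Suc obtain_subset_with_card_n)
    have "finite Y" using Y(1) Suc.prems(1) finite_subset by blast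
    have card: "card (X - Y) = j * k"
      using card_Diff_subset[OF \<open>finite Y\<close> Y(1)] Suc.prems(2) Y(2)
      by (metis add_diff_cancel_left' mult_Suc)
    have "finite (X - Y)" using Suc.prems(1) by simp
    then obtain P where P: "\<forall>Z\<in>P. Z \<subseteq> X - Y \<and> card Z = k" "pairwise disjnt P" "\<Union>P = X - Y"
      using Suc.IH[OF _ card] by blast
    have "pairwise disjnt (insert Y P)"
      using P(1,2) unfolding pairwise_insert disjnt_def by blast
    moreover have "\<Union>(insert Y P) = X" using P(3) Y(1) by blast
    ultimately show ?case using P(1) Y by (intro exI[of _ "insert Y P"]) auto
  qed
qed

lemma stars_covering_arcs_exist:
  assumes "finite V" "E \<subseteq> V \<times> V" "irrefl E" "\<And>x. x \<in> V \<Longrightarrow> k dvd card (E `` {x})"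
  obtains N where "\<And>S. S \<in> N \<Longrightarrow> is_star k V S" "design_arcs N = E"
    "\<And>S T. S \<in> N \<Longrightarrow> T \<in> N \<Longrightarrow> S \<noteq> T \<Longrightarrow> star_arcs S \<inter> star_arcs T = {}"
proof -
  have "\<forall>x\<in>V. \<exists>P. (\<forall>Y\<in>P. Y \<subseteq> E `` {x} \<and> card Y = k) \<and> pairwise disjnt P \<and> \<Union>P = E `` {x}"
    using partition_into_subsets_of_card[OF finite_Image_if_subset[OF assms(1,2)] assms(4)] by blast
  from bchoice[OF this] obtain P where
    "\<forall>x\<in>V. (\<forall>Y\<in>P x. Y \<subseteq> E `` {x} \<and> card Y = k) \<and> pairwise disjnt (P x) \<and> \<Union>(P x) = E `` {x}"
    by blast
  then have P: "\<And>x Y. x \<in> V \<Longrightarrow> Y \<in> P x \<Longrightarrow> Y \<subseteq> E `` {x} \<and> card Y = k"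
    "\<And>x. x \<in> V \<Longrightarrow> pairwise disjnt (P x)" "\<And>x. x \<in> V \<Longrightarrow> \<Union>(P x) = E `` {x}"
    by blast+
  have "E `` {x} \<subseteq> V - {x}" for x using assms(2,3) unfolding irrefl_def by blast
  then have "is_star k V (x, Y)" if "x \<in> V" "Y \<in> P x" for x Y
    using P(1)[OF that] assms(1) that unfolding is_star_def by (auto intro: finite_subset)
  then have "is_star k V S" if "S \<in> Sigma V P" for S
    using that by blast
  moreover have "design_arcs (Sigma V P) = E"
    unfolding design_arcs_Sigma using P(3) assms(2) by auto
  moreover have "star_arcs S \<inter> star_arcs T = {}"
    if "S = (x, Y)" "x \<in> V" "Y \<in> P x" "T = (x', Y')" "Y' \<in> P x'" "S \<noteq> T" for S T x Y x' Y'
  proof (cases "x = x'")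
    case True
    then have "disjnt Y Y'" using P(2) that by (auto dest: pairwiseD)
    then show ?thesis using that unfolding star_arcs_def disjnt_def by auto
  next
    case False
    then show ?thesis using that unfolding star_arcs_def by auto
  qed
  ultimately show ?thesis using that[of "Sigma V P"] by blast
qed

lemma tournament_edges_eq_complete_edges:
  assumes "tournament V D"
  shows "(\<lambda>(x, y). {x, y}) ` D = complete_edges V"
proof -
  have "(x, y) \<in> D \<Longrightarrow> x \<in> V \<and> y \<in> V \<and> x \<noteq> y" for x y
    using assms unfolding tournament_def by (auto dest: asymD)
  moreover have "x \<in> V \<Longrightarrow> y \<in> V \<Longrightarrow> x \<noteq> y \<Longrightarrow> {x, y} \<in> (\<lambda>(x, y). {x, y}) ` D" for x y
    using tournamentD(3)[OF assms, of x y] by (auto simp: insert_commute)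
  ultimately show ?thesis unfolding complete_edges_def by fastforce
qed

lemma completable_if_tournament:
  assumes design: "partial_star_design k V A" and D: "tournament V D" "design_arcs A \<subseteq> D"
    and dvd: "\<And>x. x \<in> V \<Longrightarrow> k dvd card ((D - design_arcs A) `` {x})"
  shows "completable k V A"
proof -
  have finite: "finite V" using design unfolding partial_star_design_def by blast
  have unforced: "D - design_arcs A \<subseteq> V \<times> V" "irrefl (D - design_arcs A)"
    using tournamentD(1,2)[OF D(1)] unfolding irrefl_def by (auto dest: asymD)
  obtain N where N: "\<And>S. S \<in> N \<Longrightarrow> is_star k V S" "design_arcs N = D - design_arcs A"
    "\<And>S T. S \<in> N \<Longrightarrow> T \<in> N \<Longrightarrow> S \<noteq> T \<Longrightarrow> star_arcs S \<inter> star_arcs T = {}"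
    using stars_covering_arcs_exist[OF finite unforced dvd] by blast
  have arcs: "design_arcs (A \<union> N) = D"
    unfolding design_arcs_Un N(2) using D(2) by blast
  have old_new: "star_arcs S \<inter> star_arcs T = {}" if "S \<in> A" "T \<in> N" for S T
    using star_arcs_subset_design_arcs[OF that(1)] star_arcs_subset_design_arcs[OF that(2)] N(2)
    by blast
  have disjoint: "star_arcs S \<inter> star_arcs T = {}" if ST: "S \<in> A \<union> N" "T \<in> A \<union> N" "S \<noteq> T" for S T
    using ST(1,2) star_arcs_disjoint(1)[OF design _ _ ST(3)] N(3)[OF _ _ ST(3)]
      old_new[of S T] old_new[of T S] by blast
  have "is_star k V S" if "S \<in> A \<union> N" for S
    using that design N(1) unfolding partial_star_design_def by blast
  then have "partial_star_design k V (A \<union> N)"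
    using tournamentD(2)[OF D(1)] disjoint
    unfolding arcs[symmetric] by (rule partial_star_design_if_arcs_disjoint[OF finite])
  moreover have "\<Union> (star_edges ` (A \<union> N)) = complete_edges V"
    by (simp only: Union_star_edges_eq_image_design_arcs arcs tournament_edges_eq_complete_edges[OF D(1)])
  ultimately show ?thesis unfolding completable_def by blast
qed

section \<open>Four stars on 3k + 1 vertices\<close>

lemma large_cut_arith:
  fixes s t k :: nat
  assumes "1 \<le> t" "s + t = 3 * k + 1" "2 * k + 2 \<le> s" "3 \<le> k"
  shows "s * (s - 1) + 2 * (t * (2 * k + 2) + 1) \<le> (3 * k + 1) * (3 * k)"
proof -
  have "2 \<le> t * (2 * k - 3 - t)"
  proof (cases "t = 1")
    case True
    then show ?thesis using assms(4) by simp
  next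
    case False
    then have "2 * 1 \<le> t * (2 * k - 3 - t)" using assms by (intro mult_mono) auto
    then show ?thesis by simp
  qed
  moreover have "s * (s - 1) + 2 * (t * (2 * k + 2) + 1) + t * (2 * k - 3 - t) = (3 * k + 1) * (3 * k) + 2"
  proof -
    have e: "int (s - 1) = int s - 1" "int (2 * k - 3 - t) = 2 * int k - 3 - int t"
      "int s = 3 * int k + 1 - int t"
      using assms by auto
    have "int (s * (s - 1) + 2 * (t * (2 * k + 2) + 1) + t * (2 * k - 3 - t))
        = int s * int (s - 1) + 2 * (int t * (2 * int k + 2) + 1) + int t * int (2 * k - 3 - t)"
      by (simp only: of_nat_add of_nat_mult of_nat_numeral of_nat_1)
    also have "\<dots> = int ((3 * k + 1) * (3 * k) + 2)"
      unfolding e by (simp add: algebra_simps)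
    finally show ?thesis by (simp only: of_nat_eq_iff)
  qed
  ultimately show ?thesis by linarith
qed

lemma small_cut_arith:
  fixes s f k :: nat
  assumes "s \<le> 2 * k + 1" "f \<le> 2 * k" "f + s \<le> 3 * k + 1"
  shows "s * (s - 1) + 2 * f \<le> 4 * k + 2 * (k * (s - 1))"
proof (cases "s \<le> 2 * k")
  case True
  then have "s * (s - 1) \<le> 2 * (k * (s - 1))" by (simp add: mult_le_mono1)
  then show ?thesis using assms(2) by linarith
next
  case False
  then have "s = 2 * k + 1" "f \<le> k" using assms(1,3) by auto
  then show ?thesis by (simp add: algebra_simps)
qed

(* centre_is_leaf is non-reducibility: 3k + 1 is 1 modulo k and u(3k + 1, k) = 4 = card A. *)
locale four_star_design =
  fixes k :: nat and V :: "'a set" and A :: "('a \<times> 'a set) set"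
  assumes odd_k: "odd k" and k_ge_3: "3 \<le> k"
    and finite_V: "finite V" and card_V: "card V = 3 * k + 1"
    and design: "partial_star_design k V A" and card_A: "card A = 4"
    and centre_is_leaf: "\<And>S. S \<in> A \<Longrightarrow> \<exists>T\<in>A. fst S \<in> snd T"
begin

definition stars_centred_at :: "'a \<Rightarrow> nat" where
  "stars_centred_at x = card {S \<in> A. fst S = x}"

definition forced_in_degree :: "'a \<Rightarrow> nat" where
  "forced_in_degree y = out_degree ((design_arcs A)\<inverse>) y"

lemma finite_A: "finite A"
  using card_A card.infinite by fastforce

lemma star_A: "S \<in> A \<Longrightarrow> fst S \<in> V \<and> snd S \<subseteq> V - {fst S} \<and> card (snd S) = k"
  using design unfolding partial_star_design_def is_star_def by blast

lemma forced_in_degree_add_stars_centred_at_le: "forced_in_degree y + stars_centred_at y \<le> 4"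
  using card_converse_design_arcs_Image_le[OF finite_A, of y]
    card_leaf_stars_add_card_centred_stars_le[OF design finite_A, of y] card_A
  unfolding forced_in_degree_def out_degree_def stars_centred_at_def by linarith

lemma stars_centred_at_pos_iff: "0 < stars_centred_at x \<longleftrightarrow> x \<in> fst ` A"
  unfolding stars_centred_at_def using finite_A by (auto simp: card_gt_0_iff intro: rev_image_eqI)

lemma stars_centred_at_le_2: "stars_centred_at x \<le> 2"
proof (rule ccontr)
  assume "\<not> stars_centred_at x \<le> 2"
  then have "0 < stars_centred_at x" by simp
  then obtain S where S: "S \<in> A" "fst S = x" by (force simp: stars_centred_at_pos_iff)
  obtain T where T: "T \<in> A" "x \<in> snd T" using centre_is_leaf[OF S(1)] S(2) by blast
  have x: "x \<in> V" using star_A[OF S(1)] S(2) by blast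
  have out_sub: "design_arcs A `` {x} \<subseteq> V - {x}"
    using design_arcs_subset[OF design] asymD[OF asym_design_arcs[OF design]] by blast
  have "card (V - {x}) \<le> card (design_arcs A `` {x})"
    using card_design_arcs_Image[OF design finite_A, of x] \<open>\<not> stars_centred_at x \<le> 2\<close> card_V x
    unfolding stars_centred_at_def by simp
  then have "design_arcs A `` {x} = V - {x}" using card_seteq[OF _ out_sub] finite_V by blast
  moreover have "fst T \<in> V - {x}" using star_A[OF T(1)] T(2) by auto
  ultimately have "(x, fst T) \<in> design_arcs A" by blast
  moreover have "(fst T, x) \<in> design_arcs A" unfolding design_arcs_iff using T by blast
  ultimately show False using asymD[OF asym_design_arcs[OF design]] by blast
qed

lemma stars_centred_at_2_unique:
  assumes "stars_centred_at u = 2" "stars_centred_at w = 2"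
  shows "u = w"
proof (rule ccontr)
  assume "u \<noteq> w"
  then have "card ({S \<in> A. fst S = u} \<union> {S \<in> A. fst S = w}) = card A"
    using assms finite_A card_A unfolding stars_centred_at_def by (subst card_Un_disjoint) auto
  then have all: "{S \<in> A. fst S = u} \<union> {S \<in> A. fst S = w} = A"
    using finite_A by (intro card_subset_eq) auto
  have "(y, x) \<in> design_arcs A" if "stars_centred_at x = 2" "x \<in> {u, w}" "y \<in> {u, w}" "x \<noteq> y" for x y
  proof -
    have "0 < stars_centred_at x" using that(1) by simp
    then obtain S where "S \<in> A" "fst S = x" by (force simp: stars_centred_at_pos_iff)
    then obtain T where T: "T \<in> A" "x \<in> snd T" using centre_is_leaf by blast
    then have "fst T \<noteq> x" using star_A by blast
    then have "fst T = y" using all T(1) that(2-4) by blast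
    then show ?thesis unfolding design_arcs_iff using T by blast
  qed
  then have "(w, u) \<in> design_arcs A" "(u, w) \<in> design_arcs A" using assms \<open>u \<noteq> w\<close> by auto
  then show False using asymD[OF asym_design_arcs[OF design]] by blast
qed

lemma leaf_of_other_stars:
  assumes "stars_centred_at y = 1" "3 \<le> forced_in_degree y" "S \<in> A" "fst S \<noteq> y"
  shows "y \<in> snd S"
proof -
  have sub: "{S \<in> A. y \<in> snd S} \<subseteq> A - {S \<in> A. fst S = y}" using star_A by blast
  have "card (A - {S \<in> A. fst S = y}) = 3"
    using assms(1) card_A finite_A unfolding stars_centred_at_def by (subst card_Diff_subset) auto
  also have "\<dots> \<le> card {S \<in> A. y \<in> snd S}"
    using assms(2) card_converse_design_arcs_Image_le[OF finite_A, of y]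
    unfolding forced_in_degree_def out_degree_def by linarith
  finally have "{S \<in> A. y \<in> snd S} = A - {S \<in> A. fst S = y}"
    using card_seteq[OF _ sub] finite_A by blast
  then show ?thesis using assms(3,4) by blast
qed

lemma heavy_leaf_unique:
  assumes "stars_centred_at y = 1" "3 \<le> forced_in_degree y"
    and "stars_centred_at z = 1" "3 \<le> forced_in_degree z"
  shows "y = z"
proof (rule ccontr)
  assume "y \<noteq> z"
  have "(x', x) \<in> design_arcs A"
    if "stars_centred_at x = 1" "3 \<le> forced_in_degree x" "stars_centred_at x' = 1" "x \<noteq> x'" for x x'
  proof -
    have "0 < stars_centred_at x'" using that(3) by simp
    then obtain S where "S \<in> A" "fst S = x'" by (force simp: stars_centred_at_pos_iff)
    then show ?thesis unfolding design_arcs_iff using leaf_of_other_stars[OF that(1,2)] that(4) by blast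
  qed
  then have "(z, y) \<in> design_arcs A" "(y, z) \<in> design_arcs A" using assms \<open>y \<noteq> z\<close> by auto
  then show False using asymD[OF asym_design_arcs[OF design]] by blast
qed

lemma sum_forced_in_degree_le: "sum forced_in_degree V \<le> 4 * k"
proof -
  have sub: "(design_arcs A)\<inverse> \<subseteq> V \<times> V" using design_arcs_subset[OF design] by blast
  have "sum forced_in_degree V = card ((design_arcs A)\<inverse>)"
    using sum_out_degree[OF finite_V sub order_refl] sub unfolding forced_in_degree_def
    by (simp add: Int_absorb2)
  also have "\<dots> \<le> 4 * k"
    using card_design_arcs_le[OF design finite_A] card_A by (simp add: card_converse)
  finally show ?thesis .
qed

lemma card_Diff_add_card: "S \<subseteq> V \<Longrightarrow> card S + card (V - S) = 3 * k + 1"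
  using card_Diff_subset[OF finite_subset[OF _ finite_V]] card_mono[OF finite_V] card_V
  by (metis le_add_diff_inverse)

lemma stars_centred_at_le_1: "stars_centred_at x \<noteq> 2 \<Longrightarrow> stars_centred_at x \<le> 1"
  using stars_centred_at_le_2[of x] by linarith

lemma card_out_arcs_Int_le: "card (design_arcs A `` {x} \<inter> T) \<le> k * stars_centred_at x"
proof -
  have "card (design_arcs A `` {x} \<inter> T) \<le> card (design_arcs A `` {x})"
    using finite_Image_if_subset[OF finite_V design_arcs_subset[OF design]] by (intro card_mono) auto
  then show ?thesis using card_design_arcs_Image[OF design finite_A, of x]
    unfolding stars_centred_at_def by simp
qed

lemma card_forced_arcs_into_le:
  assumes "T \<subseteq> V"
  shows "card (design_arcs A \<inter> S \<times> T) \<le> sum forced_in_degree T"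
proof -
  have sub: "(design_arcs A)\<inverse> \<subseteq> V \<times> V" using design_arcs_subset[OF design] by blast
  have "card (design_arcs A \<inter> S \<times> T) = card ((design_arcs A)\<inverse> \<inter> T \<times> S)"
    using card_converse[of "design_arcs A \<inter> S \<times> T"] by (metis converse_Int converse_Times)
  also have "\<dots> \<le> card ((design_arcs A)\<inverse> \<inter> T \<times> V)"
    using sub finite_V by (intro card_mono) (auto intro: finite_subset[of _ "V \<times> V"])
  also have "\<dots> = sum forced_in_degree T"
    using sum_out_degree[OF finite_V sub assms] unfolding forced_in_degree_def by simp
  finally show ?thesis .
qed

lemma high_degree_set_exists:
  obtains R where "fst ` A \<subseteq> R" "R \<subseteq> V" "2 * card R = 3 * k + 1"
    "\<And>y. y \<in> R - fst ` A \<Longrightarrow> forced_in_degree y \<le> 2"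
proof -
  define m where "m = (3 * k + 1) div 2"
  have m: "2 * m = 3 * k + 1" using odd_k unfolding m_def by presburger
  define C where "C = fst ` A"
  define H where "H = {y \<in> V. 3 \<le> forced_in_degree y}"
  have CV: "C \<subseteq> V" unfolding C_def using star_A by blast
  have card_C: "card C \<le> 4" unfolding C_def using card_image_le[OF finite_A, of fst] card_A by simp
  have finite_H: "finite H" unfolding H_def using finite_V by simp
  have "3 * card H = (\<Sum>y\<in>H. 3)" by simp
  also have "\<dots> \<le> sum forced_in_degree H" by (rule sum_mono) (simp add: H_def)
  also have "\<dots> \<le> sum forced_in_degree V" by (rule sum_mono2[OF finite_V]) (auto simp: H_def)
  finally have "3 * card H \<le> 4 * k" using sum_forced_in_degree_le by linarith
  moreover have "card (V - C) - card H \<le> card (V - C - H)"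
    using diff_card_le_card_Diff[OF finite_H] .
  moreover have "card (V - C) = card V - card C"
    using CV finite_V by (simp add: card_Diff_subset finite_subset)
  ultimately have "m - card C \<le> card (V - C - H)" using m card_V by linarith
  then obtain Q where Q: "Q \<subseteq> V - C - H" "card Q = m - card C"
    by (meson obtain_subset_with_card_n)
  have "card (C \<union> Q) = card C + card Q"
    using Q(1) CV finite_V by (intro card_Un_disjoint) (auto intro: finite_subset)
  then have "2 * card (C \<union> Q) = 3 * k + 1" using Q(2) card_C m k_ge_3 by linarith
  moreover have "forced_in_degree y \<le> 2" if "y \<in> (C \<union> Q) - fst ` A" for y
    using that Q(1) unfolding C_def H_def by auto
  ultimately show ?thesis using that[of "C \<union> Q"] CV Q(1) unfolding C_def by blast
qed

definition target_out_degree :: "'a set \<Rightarrow> 'a \<Rightarrow> nat" where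
  "target_out_degree R x = (if x \<in> R then 2 * k else k)"

context
  fixes R
  assumes centres_in_R: "fst ` A \<subseteq> R" and R_sub: "R \<subseteq> V" and card_R: "2 * card R = 3 * k + 1"
    and light_in_R: "\<And>y. y \<in> R - fst ` A \<Longrightarrow> forced_in_degree y \<le> 2"
begin

lemma sum_target_out_degree: "2 * sum (target_out_degree R) V = card V * (card V - 1)"
proof -
  have "sum (target_out_degree R) V = sum (target_out_degree R) (V - R) + sum (target_out_degree R) R"
    by (rule sum.subset_diff[OF R_sub finite_V])
  also have "\<dots> = k * card (V - R) + 2 * k * card R" by (simp add: target_out_degree_def)
  also have "card (V - R) = card R"
    using card_Diff_subset[OF finite_subset[OF R_sub finite_V] R_sub] card_V card_R by simp
  finally have "2 * sum (target_out_degree R) V = 3 * k * (2 * card R)" by (simp add: algebra_simps)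
  then show ?thesis using card_R card_V by simp
qed

lemma out_arcs_add_k_le_target:
  assumes "stars_centred_at x \<le> 1"
  shows "card (design_arcs A `` {x} \<inter> T) + k \<le> target_out_degree R x"
proof (cases "stars_centred_at x = 0")
  case True
  then show ?thesis using card_out_arcs_Int_le[of x T] unfolding target_out_degree_def by simp
next
  case False
  then have "x \<in> R" and "stars_centred_at x = 1"
    using centres_in_R stars_centred_at_pos_iff[of x] assms by auto
  then show ?thesis using card_out_arcs_Int_le[of x T] unfolding target_out_degree_def by simp

qed

lemma sum_out_arcs_add_k_le_target:
  assumes "finite S" "\<And>x. x \<in> S \<Longrightarrow> stars_centred_at x \<le> 1"
  shows "(\<Sum>x\<in>S. card (design_arcs A `` {x} \<inter> T)) + k * card S \<le> sum (target_out_degree R) S"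
proof -
  have "(\<Sum>x\<in>S. card (design_arcs A `` {x} \<inter> T) + k) \<le> sum (target_out_degree R) S"
    by (rule sum_mono) (rule out_arcs_add_k_le_target[OF assms(2)])
  then show ?thesis by (simp add: sum.distrib mult.commute)
qed

lemma cut_condition_small:
  assumes S: "S \<subseteq> V" and small: "card S \<le> 2 * k + 1"
  shows "card S * (card S - 1) + 2 * card (design_arcs A \<inter> S \<times> (V - S))
    \<le> 2 * sum (target_out_degree R) S"
proof -
  define out where "out x = card (design_arcs A `` {x} \<inter> (V - S))" for x
  define d where "d = target_out_degree R"
  have finite_S: "finite S" using finite_subset[OF S finite_V] .
  have cross: "card (design_arcs A \<inter> S \<times> (V - S)) = sum out S"
    unfolding out_def using card_Int_Times[OF finite_S finite_Diff[OF finite_V]] .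
  show ?thesis
  proof (cases "\<exists>w\<in>S. stars_centred_at w = 2")
    case False
    then have "sum out S + k * card S \<le> sum d S"
      unfolding out_def d_def using sum_out_arcs_add_k_le_target[OF finite_S] stars_centred_at_le_1
      by blast
    moreover have "card S * (card S - 1) \<le> card S * (2 * k)"
      using small by (intro mult_le_mono2) linarith
    then have "card S * (card S - 1) \<le> 2 * (k * card S)" by (simp add: mult_ac)
    ultimately show ?thesis using cross unfolding d_def by linarith
  next
    case True
    then obtain w where w: "w \<in> S" "stars_centred_at w = 2" by blast
    have rest: "sum out (S - {w}) + k * (card S - 1) \<le> sum d (S - {w})"
      using sum_out_arcs_add_k_le_target[of "S - {w}" "V - S"] finite_S w
        stars_centred_at_le_1 stars_centred_at_2_unique
      unfolding out_def d_def by auto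
    have dw: "d w = 2 * k"
      using w(2) centres_in_R stars_centred_at_pos_iff[of w] unfolding d_def target_out_degree_def
      by auto
    have "out w \<le> 2 * k"
      using card_out_arcs_Int_le[of w "V - S"] w(2) unfolding out_def by (simp add: mult.commute)
    moreover have "out w \<le> card (V - S)" unfolding out_def using finite_V by (intro card_mono) auto
    then have "out w + card S \<le> 3 * k + 1" using card_Diff_add_card[OF S] by linarith
    ultimately have "card S * (card S - 1) + 2 * out w \<le> 4 * k + 2 * (k * (card S - 1))"
      by (rule small_cut_arith[OF small])
    moreover have "sum out S = out w + sum out (S - {w})" "sum d S = d w + sum d (S - {w})"
      using sum.remove[OF finite_S w(1)] by auto
    ultimately show ?thesis using cross rest dw unfolding d_def by linarith
  qed
qed

lemma forced_in_degree_add_target_le: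
  "forced_in_degree y + target_out_degree R y
    \<le> 2 * k + 2 + of_bool (stars_centred_at y = 1 \<and> 3 \<le> forced_in_degree y)"
  using forced_in_degree_add_stars_centred_at_le[of y] light_in_R[of y] k_ge_3
    stars_centred_at_pos_iff[of y]
  unfolding target_out_degree_def by (cases "y \<in> R"; cases "y \<in> fst ` A") auto

lemma cut_condition_large:
  assumes S: "S \<subseteq> V" and large: "2 * k + 2 \<le> card S"
  shows "card S * (card S - 1) + 2 * card (design_arcs A \<inter> S \<times> (V - S))
    \<le> 2 * sum (target_out_degree R) S"
proof (cases "S = V")
  case True
  then show ?thesis using sum_target_out_degree by simp
next
  case False
  define T where "T = V - S"
  define d where "d = target_out_degree R"
  have finite_T: "finite T" unfolding T_def using finite_V by simp
  have T_pos: "1 \<le> card T" using False S finite_T unfolding T_def by (auto simp: Suc_le_eq card_gt_0_iff)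
  have "card (T \<inter> {y. stars_centred_at y = 1 \<and> 3 \<le> forced_in_degree y}) \<le> 1"
    using heavy_leaf_unique finite_T by (auto simp: card_le_Suc0_iff_eq)
  moreover have "(\<Sum>y\<in>T. forced_in_degree y + d y)
      \<le> (\<Sum>y\<in>T. 2 * k + 2 + of_bool (stars_centred_at y = 1 \<and> 3 \<le> forced_in_degree y))"
    unfolding d_def by (rule sum_mono) (rule forced_in_degree_add_target_le)
  ultimately have "sum forced_in_degree T + sum d T \<le> card T * (2 * k + 2) + 1"
    using finite_T unfolding sum.distrib by simp
  moreover have "card (design_arcs A \<inter> S \<times> T) \<le> sum forced_in_degree T"
    using card_forced_arcs_into_le unfolding T_def by blast
  moreover have "sum d S + sum d T = sum d V"
    using sum.subset_diff[OF S finite_V, of d] unfolding T_def by simp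
  moreover have "card S * (card S - 1) + 2 * (card T * (2 * k + 2) + 1) \<le> (3 * k + 1) * (3 * k)"
    using large_cut_arith[OF T_pos card_Diff_add_card[OF S, folded T_def] large k_ge_3] .
  ultimately show ?thesis
    using sum_target_out_degree card_V unfolding d_def T_def by simp
qed

end

lemma completable: "completable k V A"
proof -
  obtain R where R: "fst ` A \<subseteq> R" "R \<subseteq> V" "2 * card R = 3 * k + 1"
    "\<And>y. y \<in> R - fst ` A \<Longrightarrow> forced_in_degree y \<le> 2"
    using high_degree_set_exists by blast
  have cut: "card S * (card S - 1) + 2 * card (design_arcs A \<inter> S \<times> (V - S))
      \<le> 2 * sum (target_out_degree R) S" if "S \<subseteq> V" for S
    using cut_condition_small[OF R that] cut_condition_large[OF R that] by linarith
  obtain D where D: "tournament V D" "design_arcs A \<subseteq> D"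
    and out: "\<And>x. x \<in> V \<Longrightarrow> out_degree D x = target_out_degree R x"
    using tournament_with_prescribed_out_degrees[OF finite_V design_arcs_subset[OF design]
        asym_design_arcs[OF design] sum_target_out_degree[OF R] cut] by blast
  have "k dvd card ((D - design_arcs A) `` {x})" if "x \<in> V" for x
  proof -
    have "(D - design_arcs A) `` {x} = D `` {x} - design_arcs A `` {x}" by blast
    then have "card ((D - design_arcs A) `` {x}) = out_degree D x - card (design_arcs A `` {x})"
      using D(2) finite_Image_if_subset[OF finite_V design_arcs_subset[OF design]]
      unfolding out_degree_def by (simp add: card_Diff_subset Image_mono)
    then show ?thesis
      using out[OF that] card_design_arcs_Image[OF design finite_A, of x]
      unfolding target_out_degree_def by simp
  qed
  then show ?thesis using completable_if_tournament[OF design D] by blast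
qed

end

theorem lemma11:
  fixes k :: nat and V :: "'a set" and A :: "('a \<times> 'a set) set"
  assumes "odd k" and "k \<ge> 3"
    and "finite V" and "card V = 3 * k + 1"
    and "partial_star_design k V A"
    and "card A = 4"
    and "\<not> reducible k V A"
  shows "completable k V A"
proof -
  have mod: "card V mod k = 1 mod k" using assms(4) by (simp add: mod_Suc)
  then have "int (card A) = u_bound (card V) k"
    using assms(2,4,6) unfolding u_bound_def by simp
  then have "\<forall>S\<in>A. \<exists>T\<in>A. fst S \<in> snd T"
    using assms(7) mod unfolding reducible_def by blast
  then interpret four_star_design k V A
    using assms(1-6) by unfold_locales auto
  show ?thesis by (rule completable)
qed

end
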